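(* Let $G$ be a group generated by $x_1,\dots,x_n$, with finite commutator subgroup $C=[G,G]$, such that $G/C$ is free abelian of rank $n$ with basis the images of $x_1,\dots,x_n$. Let $P=X\cap\mathcal C_G(C)$, where $X=\{g_{\mathbf m}\in T: c_{\,x_1^{m_1}\cdots x_{k-1}^{m_{k-1}},\,x_k}=e \text{ for all } k=1,\dots,n\}$ and $\mathcal C_G(C)$ is the centralizer of $C$ in $G$. If $p\in P$, then $t\,p=(t\,p)^{ab}$ for every $t\in T$; that is, $g_{\mathbf r}\,g_{\mathbf m}=g_{\mathbf r+\mathbf m}$ whenever $g_{\mathbf m}\in P$ and $\mathbf r\in\mathbb Z^n$.
   Context: Notation: $\bar g=g^{-1}$, $c_{gh}=\bar g\,\bar h\,g\,h$. For $\mathbf r\in\mathbb Z^n$, $g_{\mathbf r}=x_1^{r_1}\cdots x_n^{r_n}$, and $T=\{g_{\mathbf r}\}$. Every $g\in G$ decomposes uniquely as $g=g_{\mathbf r}c$ with $c\in C$, and $g^{ab}$ denotes the element $g_{\mathbf r}$ of this decomposition. *)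

theory Defs
  imports "HOL-Algebra.Algebra"
begin

definition comm :: "('a, 'b) monoid_scheme \<Rightarrow> 'a \<Rightarrow> 'a \<Rightarrow> 'a" where
  "comm G g h = inv\<^bsub>G\<^esub> g \<otimes>\<^bsub>G\<^esub> inv\<^bsub>G\<^esub> h \<otimes>\<^bsub>G\<^esub> g \<otimes>\<^bsub>G\<^esub> h"

text \<open>Ordered product x_0^{r_0} ... x_{k-1}^{r_{k-1}} (generators indexed from 0);
  gprod G x k r for k = n is g_r.\<close>
fun gprod :: "('a, 'b) monoid_scheme \<Rightarrow> (nat \<Rightarrow> 'a) \<Rightarrow> nat \<Rightarrow> (nat \<Rightarrow> int) \<Rightarrow> 'a" where
  "gprod G x 0 r = \<one>\<^bsub>G\<^esub>"
| "gprod G x (Suc k) r = gprod G x k r \<otimes>\<^bsub>G\<^esub> (x k [^]\<^bsub>G\<^esub> r k)"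

definition centralizer :: "('a, 'b) monoid_scheme \<Rightarrow> 'a set \<Rightarrow> 'a set" where
  "centralizer G S = {g \<in> carrier G. \<forall>s\<in>S. g \<otimes>\<^bsub>G\<^esub> s = s \<otimes>\<^bsub>G\<^esub> g}"

definition Tset :: "('a, 'b) monoid_scheme \<Rightarrow> (nat \<Rightarrow> 'a) \<Rightarrow> nat \<Rightarrow> 'a set" where
  "Tset G x n = {gprod G x n r | r. True}"

definition Xset :: "('a, 'b) monoid_scheme \<Rightarrow> (nat \<Rightarrow> 'a) \<Rightarrow> nat \<Rightarrow> 'a set" where
  "Xset G x n = {gprod G x n m | m. \<forall>k<n. comm G (gprod G x k m) (x k) = \<one>\<^bsub>G\<^esub>}"

definition Pset :: "('a, 'b) monoid_scheme \<Rightarrow> (nat \<Rightarrow> 'a) \<Rightarrow> nat \<Rightarrow> 'a set" where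
  "Pset G x n = Xset G x n \<inter> centralizer G (derived G (carrier G))"

end

theory Submission
  imports Defs
begin

(* Write m_<k for the partial product x_1^m_1 ... x_(k-1)^m_(k-1). If it commutes with x_k for
   every k, it commutes with every power of x_k, and induction on k gives
   g_r g_m = g_(r+m) factor by factor. The hypothesis g_m in X only provides such an exponent
   vector m' with g_m = g_m'; but modulo the commutator subgroup C the map r |-> g_r is additive,
   so g_(m-m') lies in C and the basis hypothesis forces m = m'. *)

lemma gprod_cong:
  "(\<And>i. i < k \<Longrightarrow> r i = s i) \<Longrightarrow> gprod G x k r = gprod G x k s"
  by (induction k) auto

lemma (in group) gprod_closed:
  "x ` {..<k} \<subseteq> carrier G \<Longrightarrow> gprod G x k r \<in> carrier G"
  by (induction k) (simp_all add: lessThan_Suc)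

lemma (in group) comm_eq_one_iff_commute:
  assumes "a \<in> carrier G" "b \<in> carrier G"
  shows "comm G a b = \<one> \<longleftrightarrow> a \<otimes> b = b \<otimes> a"
proof -
  have "comm G a b = inv (b \<otimes> a) \<otimes> (a \<otimes> b)"
    using assms by (simp add: comm_def inv_mult_group m_assoc)
  also have "\<dots> = \<one> \<longleftrightarrow> a \<otimes> b = b \<otimes> a"
    using assms inv_solve_left[of \<one> "b \<otimes> a" "a \<otimes> b"] by auto
  finally show ?thesis .
qed

lemma (in group) commute_inv:
  assumes "a \<otimes> c = c \<otimes> a" "a \<in> carrier G" "c \<in> carrier G"
  shows "a \<otimes> inv c = inv c \<otimes> a"
  using assms by (metis inv_closed inv_solve_left inv_solve_right m_assoc m_closed)

lemma (in group) commute_int_pow: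
  assumes ab: "a \<otimes> b = b \<otimes> a" and carr: "a \<in> carrier G" "b \<in> carrier G"
  shows "a \<otimes> b [^] (i::int) = b [^] i \<otimes> a"
proof -
  have pow: "a \<otimes> b [^] k = b [^] k \<otimes> a" for k :: nat
    by (rule group_commutes_pow[OF ab[symmetric] carr(2,1), symmetric])
  then have "a \<otimes> inv (b [^] k) = inv (b [^] k) \<otimes> a" for k :: nat
    using carr by (simp add: commute_inv)
  then show ?thesis
    using pow carr
    by (cases i rule: int_cases) (simp_all only: int_pow_int int_pow_neg_int)
qed

lemma (in group) gprod_add:
  assumes "x ` {..<k} \<subseteq> carrier G"
    and "\<And>j. j < k \<Longrightarrow> gprod G x j s \<otimes> x j = x j \<otimes> gprod G x j s"
  shows "gprod G x k r \<otimes> gprod G x k s = gprod G x k (\<lambda>i. r i + s i)"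
  using assms
proof (induction k)
  case 0
  then show ?case by simp
next
  case (Suc k)
  let ?r = "gprod G x k r" and ?s = "gprod G x k s"
  have carr: "x k \<in> carrier G" "?r \<in> carrier G" "?s \<in> carrier G"
    using Suc.prems(1) gprod_closed[of x k] by (auto simp: lessThan_Suc)
  have swap: "x k [^] r k \<otimes> ?s = ?s \<otimes> x k [^] r k"
    using commute_int_pow[OF Suc.prems(2) carr(3,1)] by simp
  have "gprod G x (Suc k) r \<otimes> gprod G x (Suc k) s
      = ?r \<otimes> (x k [^] r k \<otimes> ?s) \<otimes> x k [^] s k"
    using carr by (simp add: m_assoc)
  also have "\<dots> = (?r \<otimes> ?s) \<otimes> (x k [^] r k \<otimes> x k [^] s k)"
    using carr by (simp add: swap m_assoc)
  also have "\<dots> = gprod G x (Suc k) (\<lambda>i. r i + s i)"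
    using Suc carr by (simp add: int_pow_mult lessThan_Suc)
  finally show ?case .
qed

lemma (in group) hom_gprod_add:
  assumes h: "h \<in> hom G H" and H: "comm_group H" and gens: "x ` {..<k} \<subseteq> carrier G"
  shows "h (gprod G x k (\<lambda>i. r i + s i)) = h (gprod G x k r) \<otimes>\<^bsub>H\<^esub> h (gprod G x k s)"
proof -
  interpret H: comm_group H by (fact H)
  show ?thesis
    using gens
  proof (induction k)
    case 0
    show ?case using hom_one[OF h] H.is_group by simp
  next
    case (Suc k)
    have xk: "x k \<in> carrier G" and gens_k: "x ` {..<k} \<subseteq> carrier G"
      using Suc.prems by (auto simp: lessThan_Suc)
    let ?h = "\<lambda>t. h (gprod G x k t)" and ?p = "\<lambda>i. h (x k) [^]\<^bsub>H\<^esub> (i::int)"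
    have hx: "h (x k) \<in> carrier H"
      using h xk by (auto simp: hom_def)
    have hg: "?h t \<in> carrier H" for t
      using h gprod_closed[OF gens_k] by (auto simp: hom_def)
    have hp: "?p i \<in> carrier H" for i
      using hx by simp
    have step: "h (gprod G x (Suc k) t) = ?h t \<otimes>\<^bsub>H\<^esub> ?p (t k)" for t
      using h xk gprod_closed[OF gens_k]
      by (simp add: hom_mult hom_int_pow[OF h xk is_group H.is_group])
    have "h (gprod G x (Suc k) (\<lambda>i. r i + s i)) = ?h (\<lambda>i. r i + s i) \<otimes>\<^bsub>H\<^esub> ?p (r k + s k)"
      by (rule step)
    also have "\<dots> = (?h r \<otimes>\<^bsub>H\<^esub> ?h s) \<otimes>\<^bsub>H\<^esub> (?p (r k) \<otimes>\<^bsub>H\<^esub> ?p (s k))"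
      using Suc.IH[OF gens_k] hx by (simp add: H.int_pow_mult)
    also have "\<dots> = (?h r \<otimes>\<^bsub>H\<^esub> ?p (r k)) \<otimes>\<^bsub>H\<^esub> (?h s \<otimes>\<^bsub>H\<^esub> ?p (s k))"
      using hg hp by (simp add: H.m_assoc H.m_lcomm)
    finally show ?case by (simp only: step)
  qed
qed

lemma (in group) gprod_eq_imp_exponents_eq:
  assumes gens: "x ` {..<n} \<subseteq> carrier G"
    and basis: "\<And>r. gprod G x n r \<in> derived G (carrier G) \<Longrightarrow> \<forall>i<n. r i = 0"
    and eq: "gprod G x n r = gprod G x n s"
  shows "\<forall>i<n. r i = s i"
proof -
  let ?D = "derived G (carrier G)" and ?d = "gprod G x n (\<lambda>i. r i - s i)"
  interpret D: normal ?D G by (rule derived_self_is_normal)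
  interpret Q: comm_group "G Mod ?D" by (rule derived_quot_is_comm_group)
  have hom: "(\<lambda>g. ?D #> g) \<in> hom G (G Mod ?D)"
    by (rule D.r_coset_hom_Mod)
  have carr: "?d \<in> carrier G" "gprod G x n s \<in> carrier G"
    using gprod_closed[OF gens] by auto
  have cosets: "?D #> ?d \<in> carrier (G Mod ?D)" "?D #> gprod G x n s \<in> carrier (G Mod ?D)"
    using hom carr by (auto simp: hom_def)
  have "(?D #> ?d) \<otimes>\<^bsub>G Mod ?D\<^esub> (?D #> gprod G x n s) = ?D #> gprod G x n s"
    using hom_gprod_add[OF hom derived_quot_is_comm_group gens, of "\<lambda>i. r i - s i" s] eq
    by simp
  then have "?D #> ?d = ?D"
    using Q.r_cancel_one[OF cosets(2,1)] by simp
  then have "?d \<in> ?D"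
    using rcos_self[OF carr(1) D.subgroup_axioms] by simp
  then show ?thesis
    using basis by fastforce
qed

theorem lemma2:
  fixes G (structure) and x :: "nat \<Rightarrow> 'a" and n :: nat
  assumes grp: "group G"
    and gens: "x ` {..<n} \<subseteq> carrier G"
    and gen: "carrier G = generate G (x ` {..<n})"
    and finC: "finite (derived G (carrier G))"
    and basis: "\<And>r :: nat \<Rightarrow> int. gprod G x n r \<in> derived G (carrier G) \<Longrightarrow> \<forall>i<n. r i = 0"
    and P: "gprod G x n m \<in> Pset G x n"
  shows "gprod G x n r \<otimes> gprod G x n m = gprod G x n (\<lambda>i. r i + m i)"
proof -
  interpret group G by (fact grp)
  obtain m' where eq: "gprod G x n m = gprod G x n m'"
    and X: "\<forall>k<n. comm G (gprod G x k m') (x k) = \<one>"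
    using P unfolding Pset_def Xset_def by auto
  have exponents: "\<forall>i<n. m i = m' i"
    by (rule gprod_eq_imp_exponents_eq[OF gens basis eq])
  have "gprod G x k m \<otimes> x k = x k \<otimes> gprod G x k m" if "k < n" for k
  proof -
    have "gprod G x k m = gprod G x k m'"
      using exponents that by (intro gprod_cong) auto
    then have "comm G (gprod G x k m) (x k) = \<one>"
      using X that by simp
    moreover have "gprod G x k m \<in> carrier G"
      using gens that by (intro gprod_closed) auto
    moreover have "x k \<in> carrier G"
      using gens that by auto
    ultimately show ?thesis
      by (simp add: comm_eq_one_iff_commute)
  qed
  then show ?thesis
    by (rule gprod_add[OF gens])
qed

end
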